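(* Let $n_x,n_y,n_z$ be pairwise relatively prime positive integers and let $K$ and $K'$ be Lissajous knots with frequencies $(n_x,n_y,n_z)$, $\phi_x=0$, whose phase shift pairs $(\phi_y,\phi_z)$ and $(\phi_y',\phi_z')$ belong to regions of the phase torus separated by $2n_y$ singular lines of the form $\phi_z=\frac{n_z}{n_y}\phi_y+l\frac{\pi}{n_y}$ ($l\in\mathbb{Z}$) (i.e., one region is reached from the other by successively crossing $2n_y$ consecutive such lines). Then all Type I crossings are the same (have the same over/under information) for both knots.
   Context: A Lissajous knot with frequencies $(n_x,n_y,n_z)$ (pairwise relatively prime integers) and phase shifts $(\phi_x,\phi_y,\phi_z)$ is the curve $K(t)=(\cos(n_xt+\phi_x),\cos(n_yt+\phi_y),\cos(n_zt+\phi_z))$, $0\le t\le2\pi$, when it is embedded. Take $\phi_x=0$. The phase torus is the torus of pairs $(\phi_y,\phi_z)\in[0,2\pi]\times[0,2\pi]$; the curve fails to be embedded exactly on the singular lines $\phi_z=\frac{n_z}{n_y}\phi_y+l\frac{\pi}{n_y}$, $\phi_z=l\frac{\pi}{n_x}$, $\phi_y=l\frac{\pi}{n_x}$ ($l\in\mathbb{Z}$), and the regions are the connected components of the complement of these lines. The Type I crossings of the projection of $K$ to the $xy$-plane are the double points given by parameter pairs $(t_1,t_2)=\big((-\frac{k}{n_x}+\frac{j}{n_y})\pi-\frac{\phi_y}{n_y},(\frac{k}{n_x}+\frac{j}{n_y})\pi-\frac{\phi_y}{n_y}\big)$ with $1\le k\le n_x-1$ and integers $j$ with $1+\lfloor \frac{n_y}{n_x}k+\frac{\phi_y}{\pi}\rfloor\le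 j\le \lfloor 2n_y-\frac{n_y}{n_x}k+\frac{\phi_y}{\pi}\rfloor$; $(k,j)$ are the parameters of the crossing. *)

theory Defs
  imports "HOL-Analysis.Analysis"
begin

definition lissajous :: "nat \<Rightarrow> nat \<Rightarrow> nat \<Rightarrow> real \<Rightarrow> real \<Rightarrow> real \<Rightarrow> real \<times> real \<times> real" where
  "lissajous nx ny nz py pz t =
     (cos (real nx * t), cos (real ny * t + py), cos (real nz * t + pz))"

definition on_slanted_line :: "nat \<Rightarrow> nat \<Rightarrow> real \<times> real \<Rightarrow> bool" where
  "on_slanted_line ny nz p \<longleftrightarrow>
     (\<exists>l::int. snd p = real nz / real ny * fst p + real_of_int l * pi / real ny)"

definition on_axis_line :: "nat \<Rightarrow> real \<times> real \<Rightarrow> bool" where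
  "on_axis_line nx p \<longleftrightarrow>
     (\<exists>l::int. snd p = real_of_int l * pi / real nx) \<or> (\<exists>l::int. fst p = real_of_int l * pi / real nx)"

definition singular_phase :: "nat \<Rightarrow> nat \<Rightarrow> nat \<Rightarrow> real \<times> real \<Rightarrow> bool" where
  "singular_phase nx ny nz p \<longleftrightarrow> on_slanted_line ny nz p \<or> on_axis_line nx p"

text \<open>Phase torus [0,2pi] x [0,2pi]; its boundary consists of singular lines, so the regions
  (components of the complement of all singular lines) are components of this open set.\<close>
definition phase_torus :: "(real \<times> real) set" where
  "phase_torus = {0..2*pi} \<times> {0..2*pi}"

definition regular_phases :: "nat \<Rightarrow> nat \<Rightarrow> nat \<Rightarrow> (real \<times> real) set" where
  "regular_phases nx ny nz = {p \<in> phase_torus. \<not> singular_phase nx ny nz p}"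

definition region :: "nat \<Rightarrow> nat \<Rightarrow> nat \<Rightarrow> real \<times> real \<Rightarrow> (real \<times> real) set" where
  "region nx ny nz p = connected_component_set (regular_phases nx ny nz) p"

text \<open>Complement of the non-slanted singular lines only: moving inside one component of this
  set, only slanted lines \<open>phi_z = nz/ny phi_y + l pi/ny\<close> are crossed.\<close>
definition box_phases :: "nat \<Rightarrow> (real \<times> real) set" where
  "box_phases nx = {p \<in> phase_torus. \<not> on_axis_line nx p}"

definition slanted_index :: "nat \<Rightarrow> nat \<Rightarrow> real \<times> real \<Rightarrow> int \<Rightarrow> bool" where
  "slanted_index ny nz p l \<longleftrightarrow>
     real_of_int l * pi / real ny < snd p - real nz / real ny * fst p \<and>
     snd p - real nz / real ny * fst p < real_of_int (l + 1) * pi / real ny"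

definition typeI_params :: "nat \<Rightarrow> nat \<Rightarrow> real \<Rightarrow> (nat \<times> int) set" where
  "typeI_params nx ny py =
     {(k, j). 1 \<le> k \<and> k \<le> nx - 1 \<and>
        1 + \<lfloor>real ny / real nx * real k + py / pi\<rfloor> \<le> j \<and>
        j \<le> \<lfloor>2 * real ny - real ny / real nx * real k + py / pi\<rfloor>}"

definition typeI_t1 :: "nat \<Rightarrow> nat \<Rightarrow> real \<Rightarrow> nat \<Rightarrow> int \<Rightarrow> real" where
  "typeI_t1 nx ny py k j = (- real k / real nx + real_of_int j / real ny) * pi - py / real ny"

definition typeI_t2 :: "nat \<Rightarrow> nat \<Rightarrow> real \<Rightarrow> nat \<Rightarrow> int \<Rightarrow> real" where
  "typeI_t2 nx ny py k j = (real k / real nx + real_of_int j / real ny) * pi - py / real ny"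

definition typeI_over :: "nat \<Rightarrow> nat \<Rightarrow> nat \<Rightarrow> real \<Rightarrow> real \<Rightarrow> nat \<Rightarrow> int \<Rightarrow> bool" where
  "typeI_over nx ny nz py pz k j \<longleftrightarrow>
     snd (snd (lissajous nx ny nz py pz (typeI_t1 nx ny py k j)))
       > snd (snd (lissajous nx ny nz py pz (typeI_t2 nx ny py k j)))"

end

theory Submission
  imports Defs
begin

text \<open>The parameter set of the Type I crossings depends on \<open>\<phi>\<^sub>y\<close> only through the floors
  \<open>\<lfloor>a/n\<^sub>x + \<phi>\<^sub>y/\<pi>\<rfloor>\<close>, which cannot change while \<open>\<phi>\<^sub>y\<close> moves without meeting a line
  \<open>\<phi>\<^sub>y = l\<pi>/n\<^sub>x\<close>; inside a component of the complement of the axis-parallel lines it does not.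
  At the crossing \<open>(k, j)\<close> the heights are \<open>cos (X \<mp> Y)\<close> with \<open>Y = n\<^sub>z k\<pi>/n\<^sub>x\<close> and
  \<open>X = n\<^sub>z j\<pi>/n\<^sub>y + (\<phi>\<^sub>z - n\<^sub>z\<phi>\<^sub>y/n\<^sub>y)\<close>, so the over/under information is the sign of
  \<open>sin X sin Y\<close>. Crossing \<open>2n\<^sub>y\<close> slanted lines shifts \<open>\<phi>\<^sub>z - n\<^sub>z\<phi>\<^sub>y/n\<^sub>y\<close> by about \<open>\<plusminus>2\<pi>\<close>;
  precisely, \<open>X\<close> stays in an interval \<open>(N\<pi>/n\<^sub>y, (N+1)\<pi>/n\<^sub>y)\<close> whose index \<open>N\<close> changes by
  \<open>\<plusminus>2n\<^sub>y\<close>, and such intervals carry the same sign of \<open>sin\<close>.\<close>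

lemma sin_mult_pos_same_half_period:
  fixes M :: int and x y :: real
  assumes "M * pi < x" "x < (M + 1) * pi" "M * pi < y" "y < (M + 1) * pi"
  shows "sin x * sin y > 0"
proof -
  have sin_M: "sin (M * pi) = 0"
    using sin_zero_iff_int2 by blast
  then have cos_M: "cos (M * pi) * cos (M * pi) = 1"
    using sin_cos_squared_add[of "M * pi"] by (simp add: power2_eq_square)
  have sin_shift: "sin z = sin (z - M * pi) * cos (M * pi)" for z
    using sin_add[of "z - M * pi" "M * pi"] sin_M by simp
  have "sin (x - M * pi) > 0" "sin (y - M * pi) > 0"
    by (rule sin_gt_zero; use assms in \<open>simp add: algebra_simps\<close>)+
  then have "sin (x - M * pi) * sin (y - M * pi) * (cos (M * pi) * cos (M * pi)) > 0"
    using cos_M by simp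
  then show ?thesis
    by (simp only: sin_shift[of x] sin_shift[of y] ac_simps)
qed

lemma sin_mult_pos_same_subinterval:
  fixes N :: int and n :: nat and x y :: real
  assumes "n > 0"
    and "N * pi / n < x" "x < (N + 1) * pi / n"
    and "N * pi / n < y" "y < (N + 1) * pi / n"
  shows "sin x * sin y > 0"
proof -
  define M where "M = N div int n"
  have "M * int n + N mod int n = N"
    unfolding M_def by (rule div_mult_mod_eq)
  moreover have "0 \<le> N mod int n" "N mod int n < int n"
    using assms(1) by simp_all
  ultimately have "M * int n \<le> N" "N + 1 \<le> (M + 1) * int n"
    by (simp_all add: algebra_simps)
  then have "real_of_int M * n \<le> N" "real_of_int N + 1 \<le> (real_of_int M + 1) * n"
    by (simp_all only: of_int_le_iff[where 'a=real, symmetric]) simp_all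
  then have "M * pi \<le> N * pi / n" "(N + 1) * pi \<le> ((M + 1) * n) * pi"
    using assms(1) by (simp add: field_simps, intro mult_right_mono) simp_all
  then have "M * pi \<le> N * pi / n" "(N + 1) * pi / n \<le> (M + 1) * pi"
    using assms(1) by (simp_all add: pos_divide_le_eq algebra_simps)
  then show ?thesis
    using assms by (intro sin_mult_pos_same_half_period[of M]) auto
qed

lemma sin_mult_pos_congruent_subintervals:
  fixes N N' :: int and n :: nat and x y :: real
  assumes "n > 0" "2 * int n dvd N' - N"
    and "N * pi / n < x" "x < (N + 1) * pi / n"
    and "N' * pi / n < y" "y < (N' + 1) * pi / n"
  shows "sin x * sin y > 0"
proof -
  obtain q where q: "N' = N + 2 * int n * q"
    using assms(2) by (metis add_diff_cancel_left' add_diff_eq dvdE)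
  have shift: "real_of_int N' * pi / n = N * pi / n + 2 * pi * q"
    "real_of_int (N' + 1) * pi / n = (N + 1) * pi / n + 2 * pi * q"
    unfolding q using assms(1) by (simp_all add: field_simps)
  have "sin y = sin (y - 2 * pi * q)"
    by (simp add: sin_diff)
  moreover have "sin x * sin (y - 2 * pi * q) > 0"
    using assms(3-6) shift by (intro sin_mult_pos_same_subinterval[OF assms(1)]) auto
  ultimately show ?thesis
    by simp
qed

lemma typeI_over_iff_sin:
  "typeI_over nx ny nz py pz k j \<longleftrightarrow>
     sin (real nz * real_of_int j * pi / real ny + (pz - real nz / real ny * py))
       * sin (real nz * real k * pi / real nx) > 0"
proof -
  define X where "X = real nz * real_of_int j * pi / real ny + (pz - real nz / real ny * py)"
  define Y where "Y = real nz * real k * pi / real nx"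
  have "real nz * typeI_t1 nx ny py k j + pz = X - Y"
    "real nz * typeI_t2 nx ny py k j + pz = X + Y"
    unfolding typeI_t1_def typeI_t2_def X_def Y_def by (simp_all add: field_simps)
  then have "typeI_over nx ny nz py pz k j \<longleftrightarrow> cos (X - Y) > cos (X + Y)"
    unfolding typeI_over_def lissajous_def by simp
  also have "\<dots> \<longleftrightarrow> sin X * sin Y > 0"
    by (simp add: cos_diff cos_add)
  finally show ?thesis
    unfolding X_def Y_def .
qed

lemma typeI_over_eq_if_slanted_index_cong:
  assumes "ny > 0"
    and "slanted_index ny nz (py, pz) l" "slanted_index ny nz (py', pz') l'"
    and "2 * int ny dvd l' - l"
  shows "typeI_over nx ny nz py' pz' k j = typeI_over nx ny nz py pz k j"
proof -
  define c where "c = pz - real nz / real ny * py"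
  define c' where "c' = pz' - real nz / real ny * py'"
  define a where "a = real nz * real_of_int j * pi / real ny"
  have shift: "real_of_int (m + int nz * j) * pi / ny = real_of_int m * pi / ny + a"
    "real_of_int (m + int nz * j + 1) * pi / ny = real_of_int (m + 1) * pi / ny + a" for m
    unfolding a_def using assms(1) by (simp_all add: field_simps)
  have "sin (a + c) * sin (a + c') > 0"
  proof (rule sin_mult_pos_congruent_subintervals[OF assms(1)])
    show "2 * int ny dvd (l' + int nz * j) - (l + int nz * j)"
      using assms(4) by simp
    show "real_of_int (l + int nz * j) * pi / ny < a + c"
      "a + c < real_of_int (l + int nz * j + 1) * pi / ny"
      using assms(2) shift[of l] unfolding slanted_index_def c_def by simp_all
    show "real_of_int (l' + int nz * j) * pi / ny < a + c'"
      "a + c' < real_of_int (l' + int nz * j + 1) * pi / ny"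
      using assms(3) shift[of l'] unfolding slanted_index_def c'_def by simp_all
  qed
  then show ?thesis
    unfolding typeI_over_iff_sin a_def[symmetric] c_def[symmetric] c'_def[symmetric]
    by (auto simp: zero_less_mult_iff)
qed

lemma floor_eq_if_no_integer_in_segment:
  fixes u v :: real
  assumes "\<And>x. x \<in> closed_segment u v \<Longrightarrow> x \<notin> \<int>"
  shows "\<lfloor>u\<rfloor> = \<lfloor>v\<rfloor>"
proof -
  have ordered: "\<lfloor>u\<rfloor> = \<lfloor>v\<rfloor>" if "u \<le> v" "\<And>x. x \<in> {u..v} \<Longrightarrow> x \<notin> \<int>" for u v :: real
  proof (rule ccontr)
    assume "\<lfloor>u\<rfloor> \<noteq> \<lfloor>v\<rfloor>"
    then have "u < \<lfloor>v\<rfloor>"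
      using floor_mono[OF \<open>u \<le> v\<close>] floor_correct[of u] by linarith
    then show False
      using that(2)[of "\<lfloor>v\<rfloor>"] by simp
  qed
  show ?thesis
  proof (cases "u \<le> v")
    case True
    then show ?thesis
      using assms by (intro ordered) (auto simp: closed_segment_eq_real_ivl)
  next
    case False
    then have "\<lfloor>v\<rfloor> = \<lfloor>u\<rfloor>"
      using assms by (intro ordered) (auto simp: closed_segment_eq_real_ivl)
    then show ?thesis ..
  qed
qed

lemma typeI_params_eq_if_no_axis_line_between:
  assumes "nx > 0"
    and no_axis: "\<And>p. p \<in> closed_segment py py' \<Longrightarrow> \<not> (\<exists>l::int. p = l * pi / nx)"
  shows "typeI_params nx ny py' = typeI_params nx ny py"
proof -
  have floor_eq: "\<lfloor>a / nx + py' / pi\<rfloor> = \<lfloor>a / nx + py / pi\<rfloor>" for a :: int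
  proof (rule floor_eq_if_no_integer_in_segment)
    fix x assume x: "x \<in> closed_segment (a / nx + py' / pi) (a / nx + py / pi)"
    define p where "p = (x - a / nx) * pi"
    have p_between: "p \<in> closed_segment py py'"
      using x pi_gt_zero unfolding p_def
      by (auto simp: closed_segment_eq_real_ivl field_simps split: if_splits)
    show "x \<notin> \<int>"
    proof
      assume "x \<in> \<int>"
      then obtain m where "x = of_int m"
        by (rule Ints_cases)
      then have "p = real_of_int (m * int nx - a) * pi / nx"
        using \<open>nx > 0\<close> unfolding p_def by (simp add: field_simps)
      then show False
        using no_axis p_between by blast
    qed
  qed
  have "real ny / real nx * real k = real_of_int (int ny * int k) / real nx"
    "2 * real ny - real ny / real nx * real k
       = real_of_int (2 * int ny * int nx - int ny * int k) / real nx" for k :: nat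
    using \<open>nx > 0\<close> by (simp_all add: field_simps)
  then have "\<lfloor>real ny / real nx * real k + py' / pi\<rfloor> = \<lfloor>real ny / real nx * real k + py / pi\<rfloor>"
    "\<lfloor>2 * real ny - real ny / real nx * real k + py' / pi\<rfloor>
       = \<lfloor>2 * real ny - real ny / real nx * real k + py / pi\<rfloor>" for k :: nat
    by (simp_all only: floor_eq)
  then show ?thesis
    unfolding typeI_params_def by (simp only:)
qed

lemma box_component_no_axis_line_between:
  assumes "(py', pz') \<in> connected_component_set (box_phases nx) (py, pz)"
    and "p \<in> closed_segment py py'"
  shows "\<not> (\<exists>l::int. p = l * pi / nx)"
proof -
  obtain T where T: "connected T" "T \<subseteq> box_phases nx" "(py, pz) \<in> T" "(py', pz') \<in> T"
    using assms(1) unfolding connected_component_def by auto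
  have "convex (fst ` T)"
    using T(1) connected_convex_1 connected_continuous_image continuous_on_fst continuous_on_id
    by blast
  moreover have "py \<in> fst ` T" "py' \<in> fst ` T"
    using T(3,4) by force+
  ultimately have "p \<in> fst ` T"
    using assms(2) convex_contains_segment by blast
  then obtain q where "(p, q) \<in> T"
    by force
  then show ?thesis
    using T(2) unfolding box_phases_def on_axis_line_def by auto
qed

text \<open>Coprimality and regularity only make the curves knots; the argument does not need them.\<close>

theorem corollary1:
  fixes nx ny nz :: nat and py pz py' pz' :: real
  assumes "0 < nx" "0 < ny" "0 < nz"
    and "coprime nx ny" "coprime nx nz" "coprime ny nz"
    and "(py, pz) \<in> regular_phases nx ny nz"
    and "(py', pz') \<in> regular_phases nx ny nz"
    and "(py', pz') \<in> connected_component_set (box_phases nx) (py, pz)"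
    and "slanted_index ny nz (py, pz) l" and "slanted_index ny nz (py', pz') l'"
    and "\<bar>l' - l\<bar> = 2 * int ny"
  shows "typeI_params nx ny py' = typeI_params nx ny py \<and>
    (\<forall>(k, j) \<in> typeI_params nx ny py.
       typeI_over nx ny nz py' pz' k j = typeI_over nx ny nz py pz k j)"
proof
  show "typeI_params nx ny py' = typeI_params nx ny py"
    using assms(1,9) box_component_no_axis_line_between
    by (intro typeI_params_eq_if_no_axis_line_between) blast+
  have "2 * int ny dvd l' - l"
    using assms(12) by (metis dvd_abs_iff dvd_refl)
  then show "\<forall>(k, j) \<in> typeI_params nx ny py.
      typeI_over nx ny nz py' pz' k j = typeI_over nx ny nz py pz k j"
    using typeI_over_eq_if_slanted_index_cong[OF assms(2,10,11)] by blast
qed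

end
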